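(* Let $n\ge2$ and consider Gram blocks of a fully symmetric solution: $P_1,\dots,P_n\in\mathbb{R}^{d\times p}$ with $P_i^TP_i=G^A$ for all $i$ and $P_i^TP_j=G^C$ for all $i\ne j$, and let $G^T=\frac1n(G^A+(n-1)G^C)$. Let $\xi_{\bar x},\xi_x\in\mathbb{R}^p$, $\bar x_i=P_i\xi_{\bar x}$ and $x_i=P_i\xi_x$. Then the constraints $\bar x_i=\frac1n\sum_{j=1}^nx_j$ for all $i=1,\dots,n$ are equivalent to $\xi_{\bar x}^TG^A\xi_{\bar x}+\xi_x^TG^T(\xi_x-2\xi_{\bar x})=0$.
   Context: This arises in performance estimation problems for distributed optimization, where a point common to all agents (here the agent average $\bar x=\frac1n\sum_jx_j$) is copied into each agent's variables as $\bar x_i$. *)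

theory Defs
  imports "HOL-Analysis.Analysis"
begin

end

theory Submission
  imports Defs
begin

(* Let m = (1/n) sum_j P_j xi_x be the agent average. The Gram relations give
   (sum_j P_j)^T P_i = GA + (n - 1) GC = n GT for every agent i, so the squared distance
   of P_i xi_xbar to m equals xi_xbar^T GA xi_xbar + xi_x^T GT (xi_x - 2 xi_xbar),
   independently of i. Hence all consensus constraints hold at once exactly when this common
   value vanishes; of n >= 2 only n > 0 is needed. *)

lemma inner_matrix_vector_mult:
  fixes A :: "real^'n^'m" and B :: "real^'k^'m"
  shows "(A *v u) \<bullet> (B *v v) = u \<bullet> ((transpose A ** B) *v v)"
  by (metis dot_lmul_matrix matrix_vector_mul_assoc transpose_matrix_vector transpose_transpose)

lemma sum_matrix_vector_mult:
  fixes f :: "'i \<Rightarrow> 'a::comm_semiring_1^'n^'m"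
  shows "(\<Sum>j\<in>I. f j) *v v = (\<Sum>j\<in>I. f j *v v)"
  by (induction I rule: infinite_finite_induct) (simp_all add: matrix_vector_mult_add_rdistrib)

lemma sum_eq_one_plus_others_const:
  fixes f :: "'i \<Rightarrow> 'a::real_vector"
  assumes "finite I" "i \<in> I" "f i = a" "\<And>j. j \<in> I \<Longrightarrow> j \<noteq> i \<Longrightarrow> f j = c"
  shows "sum f I = a + (real (card I) - 1) *\<^sub>R c"
proof -
  have "card I > 0"
    using assms card_gt_0_iff by blast
  have "sum f I = f i + (\<Sum>j\<in>I - {i}. c)"
    using assms by (simp add: sum.remove)
  also have "\<dots> = a + real (card (I - {i})) *\<^sub>R c"
    using assms by (simp del: sum_constant add: sum_constant_scaleR)
  also have "\<dots> = a + (real (card I) - 1) *\<^sub>R c"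
    using assms \<open>card I > 0\<close> by (simp add: of_nat_diff)
  finally show ?thesis .
qed

lemma inner_mean_gram_blocks:
  fixes P :: "'i \<Rightarrow> real^'p^'d" and GA GC GT :: "real^'p^'p"
  assumes I: "finite I" "i \<in> I"
    and hA: "\<forall>i\<in>I. transpose (P i) ** P i = GA"
    and hC: "\<forall>i\<in>I. \<forall>j\<in>I. i \<noteq> j \<longrightarrow> transpose (P i) ** P j = GC"
    and hT: "GT = (1 / real (card I)) *\<^sub>R (GA + (real (card I) - 1) *\<^sub>R GC)"
  shows "((1 / real (card I)) *\<^sub>R (\<Sum>j\<in>I. P j *v v)) \<bullet> (P i *v u) = v \<bullet> (GT *v u)"
proof -
  have "card I > 0"
    using I card_gt_0_iff by blast
  have gram_sum: "(\<Sum>j\<in>I. transpose (P j) ** P i) = real (card I) *\<^sub>R GT"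
    unfolding hT using I \<open>card I > 0\<close> by (auto intro!: sum_eq_one_plus_others_const simp: hA hC)
  have "(\<Sum>j\<in>I. P j *v v) \<bullet> (P i *v u) = v \<bullet> (\<Sum>j\<in>I. (transpose (P j) ** P i) *v u)"
    by (simp add: inner_sum_left inner_sum_right inner_matrix_vector_mult)
  also have "\<dots> = real (card I) * (v \<bullet> (GT *v u))"
    by (simp add: gram_sum flip: sum_matrix_vector_mult scaleR_matrix_vector_assoc)
  finally show ?thesis
    using \<open>card I > 0\<close> by simp
qed

lemma deviation_from_mean_gram_blocks:
  fixes P :: "'i \<Rightarrow> real^'p^'d" and GA GC GT :: "real^'p^'p" and a b :: "real^'p"
  assumes I: "finite I" "i \<in> I"
    and hA: "\<forall>i\<in>I. transpose (P i) ** P i = GA"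
    and hC: "\<forall>i\<in>I. \<forall>j\<in>I. i \<noteq> j \<longrightarrow> transpose (P i) ** P j = GC"
    and hT: "GT = (1 / real (card I)) *\<^sub>R (GA + (real (card I) - 1) *\<^sub>R GC)"
  defines "m \<equiv> (1 / real (card I)) *\<^sub>R (\<Sum>j\<in>I. P j *v b)"
  shows "(P i *v a - m) \<bullet> (P i *v a - m) = a \<bullet> (GA *v a) + b \<bullet> (GT *v (b - 2 *\<^sub>R a))"
proof -
  have "card I > 0"
    using I card_gt_0_iff by blast
  have mean: "m \<bullet> (P k *v u) = b \<bullet> (GT *v u)" if "k \<in> I" for k u
    unfolding m_def by (rule inner_mean_gram_blocks[OF I(1) that hA hC hT])
  have "m \<bullet> m = (1 / real (card I)) * (\<Sum>k\<in>I. m \<bullet> (P k *v b))"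
    by (subst (2) m_def) (simp add: inner_sum_right)
  also have "\<dots> = (1 / real (card I)) * (real (card I) * (b \<bullet> (GT *v b)))"
    by (simp add: mean)
  also have "\<dots> = b \<bullet> (GT *v b)"
    using \<open>card I > 0\<close> by simp
  finally have "m \<bullet> m = b \<bullet> (GT *v b)" .
  moreover have "(P i *v a) \<bullet> (P i *v a) = a \<bullet> (GA *v a)"
    using hA I by (simp add: inner_matrix_vector_mult)
  ultimately show ?thesis
    using mean[OF I(2)]
    by (simp add: inner_diff_left inner_diff_right inner_commute[of "P i *v a" m]
        matrix_vector_mult_diff_distrib matrix_vector_mult_scaleR)
qed

theorem proposition11:
  fixes n :: nat
    and P :: "nat \<Rightarrow> real^'p^'d"
    and GA GC GT :: "real^'p^'p"
    and xi_xbar xi_x :: "real^'p"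
    and xbar x :: "nat \<Rightarrow> real^'d"
  assumes n2: "n \<ge> 2"
    and hA: "\<forall>i\<in>{1..n}. transpose (P i) ** P i = GA"
    and hC: "\<forall>i\<in>{1..n}. \<forall>j\<in>{1..n}. i \<noteq> j \<longrightarrow> transpose (P i) ** P j = GC"
    and hT: "GT = (1 / real n) *\<^sub>R (GA + (real n - 1) *\<^sub>R GC)"
    and hxbar: "\<forall>i. xbar i = P i *v xi_xbar"
    and hx: "\<forall>i. x i = P i *v xi_x"
  shows "(\<forall>i\<in>{1..n}. xbar i = (1 / real n) *\<^sub>R (\<Sum>j=1..n. x j))
     \<longleftrightarrow> xi_xbar \<bullet> (GA *v xi_xbar) + xi_x \<bullet> (GT *v (xi_x - 2 *\<^sub>R xi_xbar)) = 0"
proof -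
  define m where "m = (1 / real n) *\<^sub>R (\<Sum>j=1..n. x j)"
  define E where "E = xi_xbar \<bullet> (GA *v xi_xbar) + xi_x \<bullet> (GT *v (xi_x - 2 *\<^sub>R xi_xbar))"
  have deviation: "(xbar i - m) \<bullet> (xbar i - m) = E" if "i \<in> {1..n}" for i
    using deviation_from_mean_gram_blocks[of "{1..n}" i P GA GC GT xi_xbar xi_x] that hA hC hT
    by (simp add: m_def E_def hxbar hx)
  have "1 \<in> {1..n}"
    using n2 by simp
  then have "(\<forall>i\<in>{1..n}. xbar i = m) \<longleftrightarrow> E = 0"
    using deviation by (metis inner_eq_zero_iff right_minus_eq)
  then show ?thesis
    by (simp add: m_def E_def)
qed

end
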